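(* Let $F$ be a field, $A$ a finitely generated free abelian group and $F * A$ a twisted group algebra of $A$ over $F$. Then $F * A$ has center exactly $F$ if and only if for every subgroup $A_1 \le A$ of finite index in $A$ the twisted group algebra $F * A_1$ has center $F$.
   Context: A twisted group algebra $F * A$ of a finitely generated free abelian group $A$ over a field $F$ is an associative $F$-algebra with an $F$-basis $\{\bar a : a \in A\}$ (a copy of $A$) such that $\bar a_1 \bar a_2 = \tau(a_1,a_2)\overline{a_1a_2}$ for all $a_1,a_2\in A$, where $\tau : A\times A \to F\setminus\{0\}$ satisfies $\tau(a_1,a_2)\tau(a_1a_2,a_3)=\tau(a_2,a_3)\tau(a_1,a_2a_3)$. For a subgroup $B \le A$, $F * B$ denotes the subalgebra of $F * A$ spanned by $\{\bar b : b \in B\}$; it is a twisted group algebra of $B$. *)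

theory Defs
  imports Main "HOL-Library.Function_Algebras"
begin

text \<open>The free abelian group of rank n, written additively: integer vectors
  nat => int vanishing from index n on (a copy of Z^n).\<close>
definition Zn :: "nat \<Rightarrow> (nat \<Rightarrow> int) set" where
  "Zn n = {v. \<forall>i\<ge>n. v i = 0}"

definition subgrp :: "(nat \<Rightarrow> int) set \<Rightarrow> (nat \<Rightarrow> int) set \<Rightarrow> bool" where
  "subgrp B A \<longleftrightarrow> B \<subseteq> A \<and> 0 \<in> B \<and> (\<forall>x\<in>B. \<forall>y\<in>B. x + y \<in> B) \<and> (\<forall>x\<in>B. - x \<in> B)"

definition finite_index :: "(nat \<Rightarrow> int) set \<Rightarrow> (nat \<Rightarrow> int) set \<Rightarrow> bool" where
  "finite_index B A \<longleftrightarrow> finite ((\<lambda>a. (\<lambda>b. a + b) ` B) ` A)"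

definition cocycle :: "(nat \<Rightarrow> int) set \<Rightarrow> ((nat \<Rightarrow> int) \<Rightarrow> (nat \<Rightarrow> int) \<Rightarrow> 'f::field) \<Rightarrow> bool" where
  "cocycle A \<tau> \<longleftrightarrow> (\<forall>a\<in>A. \<forall>b\<in>A. \<tau> a b \<noteq> 0) \<and>
     (\<forall>a1\<in>A. \<forall>a2\<in>A. \<forall>a3\<in>A. \<tau> a1 a2 * \<tau> (a1 + a2) a3 = \<tau> a2 a3 * \<tau> a1 (a2 + a3))"

text \<open>Elements of F*B: finitely supported coefficient functions supported in B;
  x corresponds to sum over a of (x a) * bar a.\<close>
definition tga_elems :: "(nat \<Rightarrow> int) set \<Rightarrow> ((nat \<Rightarrow> int) \<Rightarrow> 'f::field) set" where
  "tga_elems B = {x. finite {a. x a \<noteq> 0} \<and> {a. x a \<noteq> 0} \<subseteq> B}"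

text \<open>Twisted multiplication: bar a * bar b = tau a b * bar (a+b), extended bilinearly.\<close>
definition tga_mult :: "((nat \<Rightarrow> int) \<Rightarrow> (nat \<Rightarrow> int) \<Rightarrow> 'f::field)
    \<Rightarrow> ((nat \<Rightarrow> int) \<Rightarrow> 'f) \<Rightarrow> ((nat \<Rightarrow> int) \<Rightarrow> 'f) \<Rightarrow> ((nat \<Rightarrow> int) \<Rightarrow> 'f)" where
  "tga_mult \<tau> x y = (\<lambda>c. \<Sum>a\<in>{a. x a \<noteq> 0}. \<Sum>b\<in>{b. y b \<noteq> 0}.
      if a + b = c then \<tau> a b * x a * y b else 0)"

definition tga_center :: "((nat \<Rightarrow> int) \<Rightarrow> (nat \<Rightarrow> int) \<Rightarrow> 'f::field) \<Rightarrow> (nat \<Rightarrow> int) set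
    \<Rightarrow> ((nat \<Rightarrow> int) \<Rightarrow> 'f) set" where
  "tga_center \<tau> B = {x \<in> tga_elems B. \<forall>y \<in> tga_elems B. tga_mult \<tau> x y = tga_mult \<tau> y x}"

text \<open>The copy of F inside F*B: the F-multiples of bar 0 (the unit is tau(0,0)^-1 bar 0).\<close>
definition tga_scalars :: "((nat \<Rightarrow> int) \<Rightarrow> 'f::field) set" where
  "tga_scalars = {x. \<exists>c. x = (\<lambda>a. if a = 0 then c else 0)}"

end

theory Submission
  imports Defs
begin

text \<open>For a subgroup \<open>B\<close> the basis element \<open>bar a\<close> is central in \<open>F * B\<close> exactly when
  \<open>\<tau>(a,b) = \<tau>(b,a)\<close> for all \<open>b \<in> B\<close>, and comparing coefficients shows that a central element
  is supported on such \<open>a\<close>; so the center of \<open>F * B\<close> is \<open>F\<close> iff \<open>0\<close> is the only such \<open>a\<close>.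
  The ratio \<open>\<tau>(a,b) / \<tau>(b,a)\<close> is a bicharacter on \<open>A\<close>. If \<open>A\<^sub>1\<close> has finite index then
  \<open>M A \<subseteq> A\<^sub>1\<close> for some \<open>M > 0\<close>, and bilinearity moves the factor \<open>M\<close> across: if \<open>a \<in> A\<^sub>1\<close>
  commutes with \<open>A\<^sub>1\<close> then \<open>M a\<close> commutes with \<open>A\<close>. As \<open>A\<close> is torsion free, this gives the
  nontrivial direction.\<close>

definition tga_monom :: "(nat \<Rightarrow> int) \<Rightarrow> 'f::field \<Rightarrow> (nat \<Rightarrow> int) \<Rightarrow> 'f" where
  "tga_monom a c = (\<lambda>x. if x = a then c else 0)"

definition tga_commuting :: "((nat \<Rightarrow> int) \<Rightarrow> (nat \<Rightarrow> int) \<Rightarrow> 'f::field) \<Rightarrow> (nat \<Rightarrow> int) set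
    \<Rightarrow> (nat \<Rightarrow> int) set" where
  "tga_commuting \<tau> B = {a \<in> B. \<forall>b\<in>B. \<tau> a b = \<tau> b a}"

lemma tga_monom_apply: "tga_monom a c x = (if x = a then c else 0)"
  by (simp add: tga_monom_def)

lemma tga_monom_support: "c \<noteq> 0 \<Longrightarrow> {x. tga_monom a c x \<noteq> 0} = {a}"
  by (auto simp: tga_monom_def)

lemma tga_monom_in_elems: "a \<in> B \<Longrightarrow> tga_monom a c \<in> tga_elems B"
  by (auto simp: tga_elems_def tga_monom_def)

lemma tga_scalars_eq_monoms: "tga_scalars = range (tga_monom 0)"
  by (auto simp: tga_scalars_def tga_monom_def)

lemma tga_mult_monom_right_coeff:
  assumes "finite {a. x a \<noteq> 0}"
  shows "tga_mult \<tau> x (tga_monom v 1) (u + v) = \<tau> u v * x u"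
proof -
  have "tga_mult \<tau> x (tga_monom v 1) (u + v) = (\<Sum>a\<in>{a. x a \<noteq> 0}. if a = u then \<tau> a v * x a else 0)"
    unfolding tga_mult_def tga_monom_support[OF one_neq_zero]
    by (intro sum.cong) (auto simp: tga_monom_apply)
  also have "\<dots> = \<tau> u v * x u"
    using assms by (simp add: sum.delta)
  finally show ?thesis .
qed

lemma tga_mult_monom_left_coeff:
  assumes "finite {a. x a \<noteq> 0}"
  shows "tga_mult \<tau> (tga_monom v 1) x (u + v) = \<tau> v u * x u"
proof -
  have "tga_mult \<tau> (tga_monom v 1) x (u + v) = (\<Sum>a\<in>{a. x a \<noteq> 0}. if a = u then \<tau> v a * x a else 0)"
    unfolding tga_mult_def tga_monom_support[OF one_neq_zero]
    by (simp add: tga_monom_apply) (intro sum.cong; auto simp: tga_monom_apply add.commute)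
  also have "\<dots> = \<tau> v u * x u"
    using assms by (simp add: sum.delta)
  finally show ?thesis .
qed

lemma tga_monom_commute:
  assumes "\<forall>b\<in>B. \<tau> a b = \<tau> b a" and "y \<in> tga_elems B"
  shows "tga_mult \<tau> (tga_monom a c) y = tga_mult \<tau> y (tga_monom a c)"
proof (cases "c = 0")
  case True
  then show ?thesis
    by (simp add: tga_mult_def tga_monom_def)
next
  case False
  show ?thesis
    unfolding tga_mult_def tga_monom_support[OF False]
  proof (rule ext, simp, rule sum.cong)
    fix e b
    assume "b \<in> {b. y b \<noteq> 0}"
    then have "\<tau> a b = \<tau> b a"
      using assms by (auto simp: tga_elems_def)
    then show "(if a + b = e then \<tau> a b * tga_monom a c a * y b else 0) =
        (if b + a = e then \<tau> b a * y b * tga_monom a c a else 0)"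
      by (simp add: add.commute)
  qed simp
qed

lemma tga_monom_in_center:
  assumes "a \<in> tga_commuting \<tau> B"
  shows "tga_monom a c \<in> tga_center \<tau> B"
proof -
  have "a \<in> B" "\<forall>b\<in>B. \<tau> a b = \<tau> b a"
    using assms by (auto simp: tga_commuting_def)
  then show ?thesis
    unfolding tga_center_def using tga_monom_in_elems tga_monom_commute by blast
qed

lemma tga_center_support_commuting:
  assumes x: "x \<in> tga_center \<tau> B" and "x a \<noteq> 0"
  shows "a \<in> tga_commuting \<tau> B"
proof -
  have fin: "finite {a. x a \<noteq> 0}" and "a \<in> B"
    using assms by (auto simp: tga_center_def tga_elems_def)
  moreover have "\<tau> a b = \<tau> b a" if "b \<in> B" for b
  proof -
    have "tga_mult \<tau> x (tga_monom b 1) = tga_mult \<tau> (tga_monom b 1) x"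
      using x tga_monom_in_elems[OF that] by (auto simp: tga_center_def)
    then have "tga_mult \<tau> x (tga_monom b 1) (a + b) = tga_mult \<tau> (tga_monom b 1) x (a + b)"
      by simp
    then show ?thesis
      using \<open>x a \<noteq> 0\<close> by (simp add: tga_mult_monom_right_coeff[OF fin] tga_mult_monom_left_coeff[OF fin])
  qed
  ultimately show ?thesis
    by (simp add: tga_commuting_def)
qed

lemma subgrp_of_nat_mult: "subgrp B A \<Longrightarrow> b \<in> B \<Longrightarrow> of_nat k * b \<in> B"
  by (induction k) (auto simp: subgrp_def distrib_right)

lemma of_nat_mult_eq_zero_imp_zero:
  assumes "of_nat M * a = (0 :: nat \<Rightarrow> int)" and "M > 0"
  shows "a = 0"
proof
  fix i
  have "int M * a i = 0"
    using fun_cong[OF assms(1), of i] by simp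
  then show "a i = 0 i"
    using assms(2) by simp
qed

lemma subgrp_translate_self:
  assumes "subgrp A A" and "a \<in> A"
  shows "(\<lambda>b. a + b) ` A = A"
proof
  show "(\<lambda>b. a + b) ` A \<subseteq> A"
    using assms by (auto simp: subgrp_def)
  show "A \<subseteq> (\<lambda>b. a + b) ` A"
  proof
    fix x assume "x \<in> A"
    then have "- a + x \<in> A"
      using assms unfolding subgrp_def by blast
    then show "x \<in> (\<lambda>b. a + b) ` A"
      by (rule image_eqI[rotated]) simp
  qed
qed

lemma finite_index_self:
  assumes "subgrp A A"
  shows "finite_index A A"
proof -
  have "(\<lambda>a. (\<lambda>b. a + b) ` A) ` A \<subseteq> {A}"
    using subgrp_translate_self[OF assms] by auto
  then show ?thesis
    unfolding finite_index_def using finite_subset by blast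
qed

lemma finite_index_multiple_mem:
  assumes A: "subgrp A A" and B: "subgrp B A" and fin: "finite_index B A"
  shows "\<exists>M>0. \<forall>b\<in>A. of_nat M * b \<in> B"
proof -
  define cosets where "cosets = (\<lambda>a. (\<lambda>b. a + b) ` B) ` A"
  define N where "N = card cosets"
  have "\<exists>k>0. k \<le> N \<and> of_nat k * b \<in> B" if b: "b \<in> A" for b
  proof -
    define f where "f k = (\<lambda>x. of_nat k * b + x) ` B" for k :: nat
    have "f ` {0..N} \<subseteq> cosets"
      using subgrp_of_nat_mult[OF A b] by (auto simp: f_def cosets_def)
    with fin have "card (f ` {0..N}) \<le> N"
      unfolding N_def cosets_def finite_index_def by (rule card_mono)
    then have "\<not> inj_on f {0..N}"
      using card_image[of f "{0..N}"] by auto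
    then obtain j k where jk: "j < k" "k \<le> N" "f j = f k"
      unfolding inj_on_def by (metis atLeastAtMost_iff linorder_neqE_nat)
    have "of_nat k * b \<in> f k"
      using B unfolding subgrp_def f_def by (metis add.right_neutral image_eqI)
    with jk obtain t where "t \<in> B" "of_nat k * b = of_nat j * b + t"
      by (auto simp: f_def)
    moreover have "of_nat k * b = of_nat j * b + of_nat (k - j) * b"
      using jk by (simp add: of_nat_diff algebra_simps)
    ultimately show ?thesis
      using jk by (intro exI[of _ "k - j"]) auto
  qed
  moreover have "of_nat (fact N) * b \<in> B" if "0 < k" "k \<le> N" "of_nat k * b \<in> B" for k b
  proof -
    obtain q where "fact N = k * q"
      using dvd_fact[OF _ \<open>k \<le> N\<close>] \<open>0 < k\<close> by (auto elim: dvdE)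
    then have "of_nat (fact N) * b = of_nat q * (of_nat k * b)"
      by (simp add: mult_ac)
    then show ?thesis
      using subgrp_of_nat_mult[OF B \<open>of_nat k * b \<in> B\<close>] by simp
  qed
  ultimately show ?thesis
    by (metis fact_gt_zero)
qed

definition twist_ratio :: "((nat \<Rightarrow> int) \<Rightarrow> (nat \<Rightarrow> int) \<Rightarrow> 'f::field)
    \<Rightarrow> (nat \<Rightarrow> int) \<Rightarrow> (nat \<Rightarrow> int) \<Rightarrow> 'f" where
  "twist_ratio \<tau> a b = \<tau> a b / \<tau> b a"

lemma twist_ratio_swap: "twist_ratio \<tau> b a = inverse (twist_ratio \<tau> a b)"
  by (simp add: twist_ratio_def)

locale tga_cocycle =
  fixes A :: "(nat \<Rightarrow> int) set" and \<tau> :: "(nat \<Rightarrow> int) \<Rightarrow> (nat \<Rightarrow> int) \<Rightarrow> 'f::field"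
  assumes subgroup: "subgrp A A" and cocycle: "cocycle A \<tau>"
begin

lemma zero_mem: "0 \<in> A" and add_mem: "a \<in> A \<Longrightarrow> b \<in> A \<Longrightarrow> a + b \<in> A"
  using subgroup by (auto simp: subgrp_def)

lemma nonzero: "a \<in> A \<Longrightarrow> b \<in> A \<Longrightarrow> \<tau> a b \<noteq> 0"
  using cocycle by (auto simp: cocycle_def)

lemma cocycle_identity: "a \<in> A \<Longrightarrow> b \<in> A \<Longrightarrow> c \<in> A \<Longrightarrow> \<tau> a b * \<tau> (a + b) c = \<tau> b c * \<tau> a (b + c)"
  using cocycle by (auto simp: cocycle_def)

lemma zero_commute: assumes "a \<in> A" shows "\<tau> 0 a = \<tau> a 0"
proof -
  have "\<tau> 0 0 * \<tau> 0 a = \<tau> 0 a * \<tau> 0 a" and "\<tau> a 0 * \<tau> a 0 = \<tau> 0 0 * \<tau> a 0"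
    using cocycle_identity[OF zero_mem zero_mem assms] cocycle_identity[OF assms zero_mem zero_mem] by simp_all
  then show ?thesis
    using nonzero[OF zero_mem assms] nonzero[OF assms zero_mem] by simp
qed

lemma commutator_identity:
  assumes a: "a \<in> A" and b: "b \<in> A" and c: "c \<in> A"
  shows "\<tau> a (b + c) * \<tau> b a * \<tau> c a = \<tau> (b + c) a * \<tau> a b * \<tau> a c"
proof -
  have "\<tau> b c * (\<tau> a (b + c) * \<tau> b a * \<tau> c a) = (\<tau> a b * \<tau> (a + b) c) * \<tau> b a * \<tau> c a"
    using cocycle_identity[OF a b c] by (simp add: ac_simps)
  also have "\<dots> = \<tau> a b * \<tau> c a * (\<tau> b a * \<tau> (b + a) c)"
    by (simp add: ac_simps)
  also have "\<dots> = \<tau> a b * \<tau> a c * (\<tau> c a * \<tau> b (c + a))"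
    using cocycle_identity[OF b a c] by (simp add: ac_simps)
  also have "\<dots> = \<tau> a b * \<tau> a c * (\<tau> b c * \<tau> (b + c) a)"
    using cocycle_identity[OF b c a] by simp
  also have "\<dots> = \<tau> b c * (\<tau> (b + c) a * \<tau> a b * \<tau> a c)"
    by (simp add: ac_simps)
  finally show ?thesis
    using nonzero[OF b c] by simp
qed

lemma twist_ratio_add_right:
  assumes a: "a \<in> A" and b: "b \<in> A" and c: "c \<in> A"
  shows "twist_ratio \<tau> a (b + c) = twist_ratio \<tau> a b * twist_ratio \<tau> a c"
  using commutator_identity[OF assms] nonzero[OF b a] nonzero[OF c a] nonzero[OF add_mem[OF b c] a]
  by (simp add: twist_ratio_def field_simps)

lemma twist_ratio_zero_right: "a \<in> A \<Longrightarrow> twist_ratio \<tau> a 0 = 1"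
  using zero_commute nonzero zero_mem by (simp add: twist_ratio_def)

lemma twist_ratio_of_nat_right:
  assumes "a \<in> A" and "b \<in> A"
  shows "twist_ratio \<tau> a (of_nat k * b) = twist_ratio \<tau> a b ^ k"
proof (induction k)
  case 0
  then show ?case
    using twist_ratio_zero_right[OF \<open>a \<in> A\<close>] by (simp only: of_nat_0 mult_zero_left power_0)
next
  case (Suc k)
  have "of_nat (Suc k) * b = b + of_nat k * b"
    by (simp add: distrib_right)
  then have "twist_ratio \<tau> a (of_nat (Suc k) * b) = twist_ratio \<tau> a b * twist_ratio \<tau> a (of_nat k * b)"
    using twist_ratio_add_right[OF assms subgrp_of_nat_mult[OF subgroup \<open>b \<in> A\<close>]] by (simp only:)
  then show ?case
    by (simp only: Suc.IH power_Suc)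
qed

lemma twist_ratio_of_nat_left:
  "a \<in> A \<Longrightarrow> b \<in> A \<Longrightarrow> twist_ratio \<tau> (of_nat k * a) b = twist_ratio \<tau> a b ^ k"
  by (metis twist_ratio_swap twist_ratio_of_nat_right power_inverse)

lemma tga_scalars_subset_center:
  assumes "subgrp B A"
  shows "tga_scalars \<subseteq> tga_center \<tau> B"
proof -
  have "0 \<in> tga_commuting \<tau> B"
    using assms zero_commute by (auto simp: tga_commuting_def subgrp_def)
  then show ?thesis
    by (auto simp: tga_scalars_eq_monoms intro: tga_monom_in_center)
qed

lemma tga_center_eq_scalars_iff:
  assumes "subgrp B A"
  shows "tga_center \<tau> B = tga_scalars \<longleftrightarrow> tga_commuting \<tau> B \<subseteq> {0}"
proof
  assume center: "tga_center \<tau> B = tga_scalars"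
  show "tga_commuting \<tau> B \<subseteq> {0}"
  proof
    fix a assume "a \<in> tga_commuting \<tau> B"
    then have "tga_monom a 1 \<in> tga_center \<tau> B"
      by (rule tga_monom_in_center)
    then obtain c where "tga_monom a (1::'f) = tga_monom 0 c"
      using center by (auto simp: tga_scalars_eq_monoms)
    then have "tga_monom a (1::'f) a = tga_monom 0 c a"
      by simp
    then show "a \<in> {0}"
      by (simp add: tga_monom_apply split: if_splits)
  qed
next
  assume "tga_commuting \<tau> B \<subseteq> {0}"
  then have "x = tga_monom 0 (x 0)" if "x \<in> tga_center \<tau> B" for x
    using tga_center_support_commuting[OF that] by (force simp: tga_monom_def)
  then show "tga_center \<tau> B = tga_scalars"
    using tga_scalars_subset_center[OF assms] by (auto simp: tga_scalars_eq_monoms)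
qed

lemma tga_commuting_finite_index:
  assumes "subgrp B A" and "finite_index B A"
  obtains M where "M > 0" "\<And>a. a \<in> tga_commuting \<tau> B \<Longrightarrow> of_nat M * a \<in> tga_commuting \<tau> A"
proof -
  obtain M where M: "M > 0" "\<And>b. b \<in> A \<Longrightarrow> of_nat M * b \<in> B"
    using finite_index_multiple_mem[OF subgroup assms] by blast
  have "of_nat M * a \<in> tga_commuting \<tau> A" if a: "a \<in> tga_commuting \<tau> B" for a
  proof -
    have "a \<in> A"
      using a assms(1) by (auto simp: tga_commuting_def subgrp_def)
    then have Ma: "of_nat M * a \<in> A"
      by (rule subgrp_of_nat_mult[OF subgroup])
    have "\<tau> (of_nat M * a) b = \<tau> b (of_nat M * a)" if b: "b \<in> A" for b
    proof -
      have "twist_ratio \<tau> (of_nat M * a) b = twist_ratio \<tau> a (of_nat M * b)"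
        using twist_ratio_of_nat_left twist_ratio_of_nat_right \<open>a \<in> A\<close> b by simp
      also have "\<dots> = 1"
        using a M(2)[OF b] nonzero[OF subgrp_of_nat_mult[OF subgroup b] \<open>a \<in> A\<close>]
        by (simp add: tga_commuting_def twist_ratio_def)
      finally show ?thesis
        using nonzero[OF b Ma] by (simp add: twist_ratio_def)
    qed
    with Ma show ?thesis
      by (simp add: tga_commuting_def)
  qed
  with M(1) show thesis
    by (rule that)
qed

theorem tga_center_eq_scalars_iff_finite_index:
  "tga_center \<tau> A = tga_scalars \<longleftrightarrow>
    (\<forall>B. subgrp B A \<and> finite_index B A \<longrightarrow> tga_center \<tau> B = tga_scalars)"
proof
  assume "tga_center \<tau> A = tga_scalars"
  then have A: "tga_commuting \<tau> A \<subseteq> {0}"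
    using tga_center_eq_scalars_iff[OF subgroup] by simp
  show "\<forall>B. subgrp B A \<and> finite_index B A \<longrightarrow> tga_center \<tau> B = tga_scalars"
  proof (intro allI impI)
    fix B assume B: "subgrp B A \<and> finite_index B A"
    then obtain M where "M > 0" "\<And>a. a \<in> tga_commuting \<tau> B \<Longrightarrow> of_nat M * a \<in> tga_commuting \<tau> A"
      using tga_commuting_finite_index by blast
    then have "tga_commuting \<tau> B \<subseteq> {0}"
      using A of_nat_mult_eq_zero_imp_zero by blast
    then show "tga_center \<tau> B = tga_scalars"
      using tga_center_eq_scalars_iff B by blast
  qed
next
  assume "\<forall>B. subgrp B A \<and> finite_index B A \<longrightarrow> tga_center \<tau> B = tga_scalars"
  moreover have "finite_index A A"
    using subgroup by (rule finite_index_self)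
  ultimately show "tga_center \<tau> A = tga_scalars"
    using subgroup by blast
qed

end

theorem proposition2p1:
  fixes n :: nat and \<tau> :: "(nat \<Rightarrow> int) \<Rightarrow> (nat \<Rightarrow> int) \<Rightarrow> 'f::field"
  assumes "cocycle (Zn n) \<tau>"
  shows "tga_center \<tau> (Zn n) = tga_scalars \<longleftrightarrow>
    (\<forall>A1. subgrp A1 (Zn n) \<and> finite_index A1 (Zn n) \<longrightarrow> tga_center \<tau> A1 = tga_scalars)"
proof -
  have "subgrp (Zn n) (Zn n)"
    by (auto simp: subgrp_def Zn_def)
  then interpret tga_cocycle "Zn n" \<tau>
    using assms by unfold_locales
  show ?thesis
    by (rule tga_center_eq_scalars_iff_finite_index)
qed

end
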